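(* Every xor-set $\mathcal{X}\subseteq\mathbb{Z}_2^\omega$ is a maximal (with respect to inclusion) thin set. In particular, $\mathcal{X}$ is not Borel.
   Context: $\mathbb{Z}_2^\omega$ is the Cantor cube of infinite binary sequences indexed by $\omega=\{0,1,2,\dots\}$, with the product topology. A set $T\subseteq\mathbb{Z}_2^\omega$ is thin if for every $n\in\omega$ the map $x\mapsto x|_{\omega\setminus\{n\}}$ is injective on $T$. For $x\in\mathbb{Z}_2^\omega$ and $n\in\omega$, $x^{\#n}$ is the sequence obtained from $x$ by flipping the $n$-th coordinate. A set $\mathcal{X}\subseteq\mathbb{Z}_2^\omega$ is a xor-set if for every $n\in\omega$ and $x\in\mathbb{Z}_2^\omega$: $x\in\mathcal{X}\iff x^{\#n}\notin\mathcal{X}$. *)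

theory Defs
  imports "HOL-Analysis.Analysis"
begin

text \<open>The Cantor cube Z_2^omega is modelled as the type nat \<Rightarrow> bool, whose
  topology (instance from Function_Topology) is the product topology of the discrete
  (order) topology on bool.\<close>

definition thin :: "(nat \<Rightarrow> bool) set \<Rightarrow> bool" where
  "thin T \<longleftrightarrow> (\<forall>n::nat. inj_on (\<lambda>x. restrict x (UNIV - {n})) T)"

definition flip :: "(nat \<Rightarrow> bool) \<Rightarrow> nat \<Rightarrow> (nat \<Rightarrow> bool)" where
  "flip x n = x(n := \<not> x n)"

definition xor_set :: "(nat \<Rightarrow> bool) set \<Rightarrow> bool" where
  "xor_set X \<longleftrightarrow> (\<forall>n x. x \<in> X \<longleftrightarrow> flip x n \<notin> X)"

definition maximal_thin :: "(nat \<Rightarrow> bool) set \<Rightarrow> bool" where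
  "maximal_thin X \<longleftrightarrow> thin X \<and> (\<forall>T. thin T \<and> X \<subseteq> T \<longrightarrow> T = X)"

end

theory Submission
  imports Defs
begin

text \<open>A set T is thin iff it never contains both x and its neighbour x with one coordinate
  flipped. A xor-set X contains exactly one point of every such pair, so it is thin, and
  adding any further point y would put both y and its flipped neighbour (which lies in X)
  into the set.

  For non-Borelness we use that Borel sets have the Baire property. Each flip is a
  homeomorphism of the Cantor cube mapping X onto its complement. If X differed from an
  open set U by a meagre set, then either U is empty and X and its complement are both
  meagre, or U contains a nonempty basic open set W not depending on some coordinate N;
  then W - X is meagre, and flipping coordinate N maps it onto W \<inter> X, so W is meagre.
  Both contradict the Baire category theorem for the compact Hausdorff space Z_2^omega.\<close>

definition meager :: "'a::topological_space set \<Rightarrow> bool" where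
  "meager M \<longleftrightarrow> (\<exists>G. countable G \<and> (\<forall>T\<in>G. closed T \<and> interior T = {}) \<and> M \<subseteq> \<Union>G)"

lemma meager_subset: "meager M \<Longrightarrow> N \<subseteq> M \<Longrightarrow> meager N"
  unfolding meager_def by (meson order_trans)

lemma meager_empty [simp]: "meager {}"
  unfolding meager_def by (intro exI[of _ "{}"]) simp

lemma meager_UN:
  assumes "\<And>i::nat. meager (M i)"
  shows "meager (\<Union>i. M i)"
proof -
  obtain G where G: "\<And>i. countable (G i)" "\<And>i. \<forall>T\<in>G i. closed T \<and> interior T = {}"
    "\<And>i. M i \<subseteq> \<Union>(G i)"
    using assms unfolding meager_def by metis
  then have "countable (\<Union>i. G i) \<and> (\<forall>T\<in>(\<Union>i. G i). closed T \<and> interior T = {})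
      \<and> (\<Union>i. M i) \<subseteq> \<Union>(\<Union>i. G i)"
    by fastforce
  then show ?thesis
    unfolding meager_def by blast
qed

lemma meager_Un:
  assumes "meager M" "meager N"
  shows "meager (M \<union> N)"
proof -
  obtain G H where "countable G" "\<forall>T\<in>G. closed T \<and> interior T = {}" "M \<subseteq> \<Union>G"
    "countable H" "\<forall>T\<in>H. closed T \<and> interior T = {}" "N \<subseteq> \<Union>H"
    using assms unfolding meager_def by metis
  then show ?thesis
    unfolding meager_def by (intro exI[of _ "G \<union> H"]) auto
qed

lemma meager_homeomorphic_image:
  assumes f: "homeomorphic_map euclidean euclidean f" and "meager M"
  shows "meager (f ` M)"
proof -
  obtain G where G: "countable G" "\<And>T. T \<in> G \<Longrightarrow> closed T \<and> interior T = {}" "M \<subseteq> \<Union>G"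
    using \<open>meager M\<close> unfolding meager_def by blast
  have "closed (f ` T) \<and> interior (f ` T) = {}" if "T \<in> G" for T
  proof
    show "closed (f ` T)"
      using homeomorphic_map_closedness[OF f, of T] G(2)[OF that] by simp
    show "interior (f ` T) = {}"
      using homeomorphic_map_interior_of[OF f, of T] G(2)[OF that] by simp
  qed
  moreover have "countable ((\<lambda>T. f ` T) ` G)" "f ` M \<subseteq> \<Union>((\<lambda>T. f ` T) ` G)"
    using G(1,3) by auto
  ultimately show ?thesis
    unfolding meager_def by (intro exI[of _ "(\<lambda>T. f ` T) ` G"]) auto
qed

lemma Hausdorff_space_euclidean_t2: "Hausdorff_space (euclidean :: 'a::t2_space topology)"
  unfolding Hausdorff_space_def disjnt_def by (metis hausdorff open_openin)

lemma nonempty_open_not_meager: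
  fixes W :: "'a::topological_space set"
  assumes "locally_compact_space (euclidean :: 'a topology)" "Hausdorff_space (euclidean :: 'a topology)"
    and "open W" "W \<noteq> {}"
  shows "\<not> meager W"
proof
  assume "meager W"
  then obtain G where G: "countable G" "\<And>T. T \<in> G \<Longrightarrow> closed T \<and> interior T = {}" "W \<subseteq> \<Union>G"
    unfolding meager_def by blast
  have "regular_space (euclidean :: 'a topology)"
    using assms(1,2) locally_compact_Hausdorff_imp_regular_space by blast
  then have "euclidean interior_of (\<Union>G) = {}"
    using assms(1) G(1,2) by (intro Baire_category_alt) auto
  moreover have "W \<subseteq> interior (\<Union>G)"
    using assms(3) G(3) by (simp add: interior_maximal)
  ultimately show False
    using assms(4) by simp
qed

definition baire_property :: "'a::topological_space set \<Rightarrow> bool" where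
  "baire_property A \<longleftrightarrow> (\<exists>U. open U \<and> meager ((A - U) \<union> (U - A)))"

lemma open_imp_baire_property: "open U \<Longrightarrow> baire_property U"
  unfolding baire_property_def by (intro exI[of _ U]) simp

lemma baire_property_Compl:
  assumes "baire_property A"
  shows "baire_property (- A)"
proof -
  obtain U where U: "open U" "meager ((A - U) \<union> (U - A))"
    using assms unfolding baire_property_def by blast
  define V where "V = interior (- U)"
  \<comment> \<open>the boundary of U, closed and nowhere dense\<close>
  define F where "F = - U - V"
  have "interior F \<subseteq> V"
    unfolding F_def V_def by (rule interior_mono) blast
  then have "interior F = {}"
    using interior_subset[of F] unfolding F_def by blast
  moreover have "closed F"
    unfolding F_def V_def using U(1) by (intro closed_Diff) auto
  ultimately have "meager F"
    unfolding meager_def by (intro exI[of _ "{F}"]) simp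
  then have "meager ((A - U) \<union> (U - A) \<union> F)"
    using U(2) by (rule meager_Un[rotated])
  then have "meager ((- A - V) \<union> (V - - A))"
    by (rule meager_subset) (use interior_subset[of "- U"] in \<open>auto simp: F_def V_def\<close>)
  then show ?thesis
    unfolding baire_property_def V_def using open_interior by blast
qed

lemma baire_property_UN:
  assumes "\<And>i::nat. baire_property (A i)"
  shows "baire_property (\<Union>i. A i)"
proof -
  obtain U where U: "\<And>i. open (U i)" "\<And>i. meager ((A i - U i) \<union> (U i - A i))"
    using assms unfolding baire_property_def by metis
  have "meager (\<Union>i. (A i - U i) \<union> (U i - A i))"
    using U(2) by (rule meager_UN)
  then have "meager (((\<Union>i. A i) - (\<Union>i. U i)) \<union> ((\<Union>i. U i) - (\<Union>i. A i)))"
    by (rule meager_subset) blast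
  moreover have "open (\<Union>i. U i)"
    using U(1) by blast
  ultimately show ?thesis
    unfolding baire_property_def by blast
qed

lemma borel_imp_baire_property:
  assumes "A \<in> sets (borel :: 'a::topological_space measure)"
  shows "baire_property A"
proof -
  have "A \<in> sigma_sets UNIV {S. open S}"
    using assms by (simp add: sets_borel)
  then show ?thesis
  proof induction
    case (Basic U)
    then show ?case
      by (simp add: open_imp_baire_property)
  next
    case Empty
    then show ?case
      by (simp add: open_imp_baire_property)
  next
    case (Compl A)
    then show ?case
      using baire_property_Compl by (simp add: Compl_eq_Diff_UNIV)
  next
    case (Union A)
    then show ?case
      by (simp add: baire_property_UN)
  qed
qed

lemma locally_compact_Hausdorff_cantor_cube:
  "locally_compact_space (euclidean :: (nat \<Rightarrow> bool) topology)"
  "Hausdorff_space (euclidean :: (nat \<Rightarrow> bool) topology)"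
proof -
  have "compact_space (euclidean :: bool topology)"
    by (simp add: compact_space_def finite_imp_compact)
  then show "locally_compact_space (euclidean :: (nat \<Rightarrow> bool) topology)"
    by (metis compact_imp_locally_compact_space compact_space_product_topology
        euclidean_product_topology)
  show "Hausdorff_space (euclidean :: (nat \<Rightarrow> bool) topology)"
    by (metis Hausdorff_space_euclidean_t2 Hausdorff_space_product_topology
        euclidean_product_topology)
qed

lemma open_contains_open_free_coordinate:
  fixes U :: "(nat \<Rightarrow> 'a::topological_space) set"
  assumes "open U" "U \<noteq> {}"
  obtains W N where "open W" "W \<noteq> {}" "W \<subseteq> U" "\<And>x b. x \<in> W \<Longrightarrow> x(N := b) \<in> W"
proof -
  obtain x where "x \<in> U"
    using assms(2) by blast
  then obtain Xs where Xs: "x \<in> (\<Pi>\<^sub>E i\<in>UNIV. Xs i)" "\<And>i. open (Xs i)"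
      "finite {i. Xs i \<noteq> UNIV}" "(\<Pi>\<^sub>E i\<in>UNIV. Xs i) \<subseteq> U"
    using product_topology_open_contains_basis[of "\<lambda>_. euclidean" UNIV U x] assms(1)
    by (auto simp: open_fun_def)
  obtain N where "Xs N = UNIV"
    using ex_new_if_finite[OF infinite_UNIV_nat Xs(3)] by blast
  then have "y(N := b) \<in> (\<Pi>\<^sub>E i\<in>UNIV. Xs i)" if "y \<in> (\<Pi>\<^sub>E i\<in>UNIV. Xs i)" for y b
    using that by auto
  moreover have "open (\<Pi>\<^sub>E i\<in>UNIV. Xs i)"
    using Xs by (intro open_PiE) auto
  ultimately show ?thesis
    using that Xs(1,4) by blast
qed

lemma flip_flip [simp]: "flip (flip x n) n = x"
  unfolding flip_def by auto

lemma inj_flip: "inj (\<lambda>x. flip x n)"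
  by (metis flip_flip injI)

lemma homeomorphic_map_flip: "homeomorphic_map euclidean euclidean (\<lambda>x. flip x n)"
proof (rule homeomorphic_map_involution)
  have "continuous_on UNIV (\<lambda>x. flip x n i)" for i
    by (cases "i = n") (auto simp: flip_def intro: continuous_on_compose2[of UNIV Not])
  then show "continuous_map euclidean euclidean (\<lambda>x. flip x n)"
    by (simp add: continuous_on_coordinatewise_then_product)
qed simp

lemma xor_set_flip_image:
  assumes "xor_set X"
  shows "(\<lambda>x. flip x n) ` X = - X"
proof
  show "(\<lambda>x. flip x n) ` X \<subseteq> - X"
    using assms unfolding xor_set_def by blast
  show "- X \<subseteq> (\<lambda>x. flip x n) ` X"
  proof
    fix x
    assume "x \<in> - X"
    then have "flip x n \<in> X"
      using assms unfolding xor_set_def by blast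
    then show "x \<in> (\<lambda>x. flip x n) ` X"
      by (rule rev_image_eqI) simp
  qed
qed

lemma xor_set_not_meager_in_open:
  assumes "xor_set X" "open U" "U \<noteq> {}"
  shows "\<not> meager (U - X)"
proof
  assume "meager (U - X)"
  obtain W N where W: "open W" "W \<noteq> {}" "W \<subseteq> U" "\<And>x b. x \<in> W \<Longrightarrow> x(N := b) \<in> W"
    using open_contains_open_free_coordinate[OF assms(2,3)] by blast
  have flip_W: "(\<lambda>x. flip x N) ` W = W"
  proof
    show flip_W_subset: "(\<lambda>x. flip x N) ` W \<subseteq> W"
      using W(4) unfolding flip_def by blast
    show "W \<subseteq> (\<lambda>x. flip x N) ` W"
    proof
      fix x
      assume "x \<in> W"
      then have "flip x N \<in> W"
        using flip_W_subset by blast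
      then show "x \<in> (\<lambda>x. flip x N) ` W"
        by (rule rev_image_eqI) simp
    qed
  qed
  have "meager (W - X)"
    using \<open>meager (U - X)\<close> W(3) meager_subset by blast
  moreover have "(\<lambda>x. flip x N) ` (W - X) = W \<inter> X"
    by (simp only: image_set_diff[OF inj_flip] flip_W xor_set_flip_image[OF assms(1)]) blast
  ultimately have "meager (W \<inter> X)"
    by (metis meager_homeomorphic_image homeomorphic_map_flip)
  then have "meager W"
    using \<open>meager (W - X)\<close> meager_Un by (metis Un_Diff_Int)
  then show False
    using nonempty_open_not_meager locally_compact_Hausdorff_cantor_cube W(1,2) by blast
qed

lemma xor_set_not_borel:
  assumes "xor_set X"
  shows "X \<notin> sets (borel :: (nat \<Rightarrow> bool) measure)"
proof
  assume "X \<in> sets borel"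
  then obtain U where U: "open U" "meager ((X - U) \<union> (U - X))"
    using borel_imp_baire_property unfolding baire_property_def by blast
  show False
  proof (cases "U = {}")
    case True
    then have "meager ((\<lambda>x. flip x 0) ` X)"
      using U(2) meager_homeomorphic_image homeomorphic_map_flip by fastforce
    then show False
      using xor_set_not_meager_in_open[OF assms open_UNIV] xor_set_flip_image[OF assms]
      by (simp add: Compl_eq_Diff_UNIV)
  next
    case False
    then show False
      using xor_set_not_meager_in_open[OF assms U(1)] U(2) meager_subset by blast
  qed
qed

lemma restrict_eq_iff_flip:
  "restrict x (UNIV - {n}) = restrict y (UNIV - {n}) \<longleftrightarrow> y = x \<or> y = flip x n"
proof -
  have "restrict x (UNIV - {n}) = restrict y (UNIV - {n}) \<longleftrightarrow> (\<forall>i. i \<noteq> n \<longrightarrow> x i = y i)"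
    by (auto simp: fun_eq_iff restrict_def)
  also have "\<dots> \<longleftrightarrow> y = x \<or> y = flip x n"
    by (cases "y n = x n") (auto simp: fun_eq_iff flip_def)
  finally show ?thesis .
qed

lemma thin_iff_flip_notin: "thin T \<longleftrightarrow> (\<forall>x\<in>T. \<forall>n. flip x n \<notin> T)"
proof -
  have "flip x n \<noteq> x" for x n
    unfolding flip_def by (metis fun_upd_same)
  then show ?thesis
    unfolding thin_def inj_on_def restrict_eq_iff_flip by (metis flip_flip)
qed

lemma xor_set_maximal_thin:
  assumes "xor_set X"
  shows "maximal_thin X"
  unfolding maximal_thin_def thin_iff_flip_notin
proof (intro conjI allI impI)
  show "\<forall>x\<in>X. \<forall>n. flip x n \<notin> X"
    using assms unfolding xor_set_def by blast
  fix T
  assume T: "(\<forall>x\<in>T. \<forall>n. flip x n \<notin> T) \<and> X \<subseteq> T"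
  have "y \<in> X" if "y \<in> T" for y
    using assms T that unfolding xor_set_def by blast
  with T show "T = X"
    by blast
qed

theorem proposition13:
  fixes X :: "(nat \<Rightarrow> bool) set"
  assumes "xor_set X"
  shows "maximal_thin X \<and> X \<notin> sets (borel :: (nat \<Rightarrow> bool) measure)"
  using xor_set_maximal_thin[OF assms] xor_set_not_borel[OF assms] by blast

end
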